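(* Let $d,n\ge 1$, let $\mathbf{x}_1,\ldots,\mathbf{x}_n\in\mathbb{R}^d$ (column vectors), $y_1,\ldots,y_n\in\mathbb{R}$, and $\eta>0$. Consider the linear self-attention (LSA) layer acting on a sequence $(\mathbf{z}_1,\ldots,\mathbf{z}_n)$ of vectors in $\mathbb{R}^{d+1}$ by $$\mathbf{z}_j\leftarrow \mathbf{z}_j+\mathbf{P}\mathbf{V}\sum_{i=1}^n \mathbf{z}_i\left(\mathbf{z}_i^\top\mathbf{K}^\top\mathbf{Q}\mathbf{z}_j\right),\qquad j=1,\ldots,n,$$ with parameters $$\mathbf{K}=\mathbf{Q}=\begin{pmatrix}\mathbf{I}_{d\times d}&\mathbf{0}\\ 0&0\end{pmatrix},\quad \mathbf{V}=\begin{pmatrix}\mathbf{0}_{d\times d}&\mathbf{0}\\ \mathbf{w}^{(0)}&-1\end{pmatrix},\quad \mathbf{P}=\frac{\eta}{n}\mathbf{I},$$ where $\mathbf{w}^{(0)}=0$ (a $1\times d$ row vector). Apply $l$ such layers in succession (all with these same parameters) to the input $\mathbf{z}_j^{(0)}=(\mathbf{x}_j^\top,y_j)^\top$, $j=1,\ldots,n$, and denote by $\mathbf{z}_j^{(l)}$ the output of the $l$-th layer. Define row vectors $\mathbf{w}^{(l)}\in\mathbb{R}^{1\times d}$ by $\mathbf{w}^{(0)}=0$ and $$\mathbf{w}^{(l)}=\mathbf{w}^{(l-1)}+\frac{\eta}{n}\sum_{i=1}^n\left(y_i-\mathbf{w}^{(l-1)}\mathbf{x}_i\right)\mathbf{x}_i^\top,\qquad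 l\ge 1.$$ Then for every $l\ge 0$ and every $j$, $\mathbf{z}_j^{(l)}=(\mathbf{x}_j^\top,\delta_j^{(l)})^\top$ where $\delta_j^{(l)}=y_j-\mathbf{w}^{(l)}\mathbf{x}_j$.
   Context: Weight vectors $\mathbf{w}$ are $1\times d$ row vectors and inputs $\mathbf{x}_i$ are $d\times 1$ column vectors, so $\mathbf{w}\mathbf{x}_i$ is a scalar. The recursion for $\mathbf{w}^{(l)}$ is gradient descent with step size $\eta$ on the least-squares loss $L(\mathbf{w})=\frac{1}{2n}\sum_{i=1}^n(\mathbf{w}\mathbf{x}_i-y_i)^2$. *)

theory Defs
  imports Complex_Main
begin

text \<open>Vectors in R^m are functions nat => real, only indices < m matter.
  Matrices in R^(m x m) are functions nat => nat => real (row, column).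
  A sequence z_1..z_n of vectors is Z :: nat => nat => real with Z j the j-th token
  (tokens indexed 0..n-1). For R^(d+1), indices 0..d-1 hold the x-part, index d the y-part.\<close>

definition mat_vec :: "nat \<Rightarrow> (nat \<Rightarrow> nat \<Rightarrow> real) \<Rightarrow> (nat \<Rightarrow> real) \<Rightarrow> (nat \<Rightarrow> real)" where
  "mat_vec m M v = (\<lambda>a. \<Sum>b<m. M a b * v b)"

definition dotp :: "nat \<Rightarrow> (nat \<Rightarrow> real) \<Rightarrow> (nat \<Rightarrow> real) \<Rightarrow> real" where
  "dotp m u v = (\<Sum>a<m. u a * v a)"

text \<open>One LSA layer on tokens in R^m:
  z_j <- z_j + P V (sum_i z_i (z_i^T K^T Q z_j)); note z_i^T K^T Q z_j = (K z_i) . (Q z_j).\<close>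
definition lsa_layer ::
  "nat \<Rightarrow> nat \<Rightarrow> (nat \<Rightarrow> nat \<Rightarrow> real) \<Rightarrow> (nat \<Rightarrow> nat \<Rightarrow> real) \<Rightarrow> (nat \<Rightarrow> nat \<Rightarrow> real)
     \<Rightarrow> (nat \<Rightarrow> nat \<Rightarrow> real) \<Rightarrow> (nat \<Rightarrow> nat \<Rightarrow> real) \<Rightarrow> (nat \<Rightarrow> nat \<Rightarrow> real)" where
  "lsa_layer m n P V K Q Z = (\<lambda>j a. Z j a +
     mat_vec m P (mat_vec m V
       (\<lambda>c. \<Sum>i<n. Z i c * dotp m (mat_vec m K (Z i)) (mat_vec m Q (Z j)))) a)"

definition KQ_mat :: "nat \<Rightarrow> nat \<Rightarrow> nat \<Rightarrow> real" where
  "KQ_mat d = (\<lambda>a b. if a < d \<and> b < d \<and> a = b then 1 else 0)"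

definition V_mat :: "nat \<Rightarrow> (nat \<Rightarrow> real) \<Rightarrow> nat \<Rightarrow> nat \<Rightarrow> real" where
  "V_mat d w0 = (\<lambda>a b. if a = d \<and> b < d then w0 b
                        else if a = d \<and> b = d then -1 else 0)"

definition P_mat :: "real \<Rightarrow> nat \<Rightarrow> nat \<Rightarrow> nat \<Rightarrow> real" where
  "P_mat \<eta> n = (\<lambda>a b. if a = b then \<eta> / real n else 0)"

fun gd_w :: "nat \<Rightarrow> nat \<Rightarrow> real \<Rightarrow> (nat \<Rightarrow> nat \<Rightarrow> real) \<Rightarrow> (nat \<Rightarrow> real) \<Rightarrow> nat \<Rightarrow> (nat \<Rightarrow> real)" where
  "gd_w d n \<eta> x y 0 = (\<lambda>k. 0)"
| "gd_w d n \<eta> x y (Suc l) = (\<lambda>k. gd_w d n \<eta> x y l k +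
     \<eta> / real n * (\<Sum>i<n. (y i - (\<Sum>b<d. gd_w d n \<eta> x y l b * x i b)) * x i k))"

end

theory Submission
  imports Defs
begin

text \<open>With these parameters the key and query matrices project onto the x-part, so the attention
  score of tokens i and j is the Gram entry x_i . x_j, and the value matrix extracts minus the last
  coordinate. Hence a layer keeps the x-part and maps the last coordinates r_j to
  r_j - (\<eta>/n) \<Sum>_i r_i (x_i . x_j). One gradient step changes the residuals y_j - w x_j in exactly
  the same way, so induction on l keeps the last coordinates equal to the residuals.\<close>

lemma mat_vec_KQ_mat:
  assumes "a < Suc d"
  shows "mat_vec (Suc d) (KQ_mat d) v a = (if a < d then v a else 0)"
proof -
  have "mat_vec (Suc d) (KQ_mat d) v a = (\<Sum>b<Suc d. if b = a then (if a < d then v b else 0) else 0)"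
    unfolding mat_vec_def KQ_mat_def by (rule sum.cong) auto
  also have "\<dots> = (if a < d then v a else 0)"
    using assms by (simp add: sum.delta)
  finally show ?thesis .
qed

lemma dotp_KQ_mat:
  "dotp (Suc d) (mat_vec (Suc d) (KQ_mat d) u) (mat_vec (Suc d) (KQ_mat d) v) = (\<Sum>k<d. u k * v k)"
proof -
  have "dotp (Suc d) (mat_vec (Suc d) (KQ_mat d) u) (mat_vec (Suc d) (KQ_mat d) v)
      = (\<Sum>a<Suc d. if a < d then u a * v a else 0)"
    unfolding dotp_def by (rule sum.cong) (auto simp: mat_vec_KQ_mat)
  then show ?thesis
    by simp
qed

lemma mat_vec_P_mat:
  assumes "a < m"
  shows "mat_vec m (P_mat \<eta> n) u a = \<eta> / real n * u a"
proof -
  have "mat_vec m (P_mat \<eta> n) u a = (\<Sum>b<m. if b = a then \<eta> / real n * u b else 0)"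
    unfolding mat_vec_def P_mat_def by (rule sum.cong) auto
  also have "\<dots> = \<eta> / real n * u a"
    using assms by (simp add: sum.delta)
  finally show ?thesis .
qed

lemma mat_vec_V_mat:
  "mat_vec (Suc d) (V_mat d w0) u a = (if a = d then (\<Sum>b<d. w0 b * u b) - u d else 0)"
  by (simp add: mat_vec_def V_mat_def if_distrib[of "\<lambda>t. t * u _"] sum.distrib)

lemma lsa_layer_gram_update:
  assumes "a \<le> d"
  shows "lsa_layer (d + 1) n (P_mat \<eta> n) (V_mat d (\<lambda>_. 0)) (KQ_mat d) (KQ_mat d) Z j a
       = (if a < d then Z j a
          else Z j d - \<eta> / real n * (\<Sum>i<n. Z i d * (\<Sum>k<d. Z i k * Z j k)))"
  using assms by (simp add: lsa_layer_def mat_vec_P_mat mat_vec_V_mat dotp_KQ_mat)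

lemma lsa_layer_residual_update:
  assumes Z: "\<And>i a. i < n \<Longrightarrow> a \<le> d \<Longrightarrow> Z i a = (if a < d then x i a else r i)"
    and "j < n" and "a \<le> d"
  shows "lsa_layer (d + 1) n (P_mat \<eta> n) (V_mat d (\<lambda>_. 0)) (KQ_mat d) (KQ_mat d) Z j a
       = (if a < d then x j a else r j - \<eta> / real n * (\<Sum>i<n. r i * (\<Sum>k<d. x i k * x j k)))"
proof -
  have "(\<Sum>i<n. Z i d * (\<Sum>k<d. Z i k * Z j k)) = (\<Sum>i<n. r i * (\<Sum>k<d. x i k * x j k))"
    using Z \<open>j < n\<close> by (intro sum.cong) auto
  then show ?thesis
    unfolding lsa_layer_gram_update[OF \<open>a \<le> d\<close>] using Z \<open>j < n\<close> \<open>a \<le> d\<close> by simp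
qed

lemma gd_w_Suc_residual:
  fixes d n l :: nat and \<eta> :: real and x :: "nat \<Rightarrow> nat \<Rightarrow> real" and y :: "nat \<Rightarrow> real"
  defines "r \<equiv> \<lambda>i. y i - (\<Sum>k<d. gd_w d n \<eta> x y l k * x i k)"
  shows "y j - (\<Sum>k<d. gd_w d n \<eta> x y (Suc l) k * x j k)
       = r j - \<eta> / real n * (\<Sum>i<n. r i * (\<Sum>k<d. x i k * x j k))"
proof -
  have "(\<Sum>k<d. gd_w d n \<eta> x y (Suc l) k * x j k)
      = (\<Sum>k<d. gd_w d n \<eta> x y l k * x j k) + \<eta> / real n * (\<Sum>k<d. (\<Sum>i<n. r i * x i k) * x j k)"
    by (simp add: r_def distrib_right sum.distrib sum_distrib_left sum_distrib_right sum_divide_distrib mult.assoc)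
  also have "(\<Sum>k<d. (\<Sum>i<n. r i * x i k) * x j k) = (\<Sum>i<n. r i * (\<Sum>k<d. x i k * x j k))"
    by (simp add: sum_distrib_left sum_distrib_right mult.assoc) (rule sum.swap)
  finally show ?thesis
    by (simp add: r_def)
qed

theorem proposition1:
  fixes d n :: nat and \<eta> :: real and x :: "nat \<Rightarrow> nat \<Rightarrow> real" and y :: "nat \<Rightarrow> real"
    and l :: nat
  assumes "d \<ge> 1" and "n \<ge> 1" and "\<eta> > 0"
  defines "Z0 \<equiv> (\<lambda>j a. if a < d then x j a else y j)"
  defines "layer \<equiv> lsa_layer (d + 1) n (P_mat \<eta> n) (V_mat d (\<lambda>_. 0)) (KQ_mat d) (KQ_mat d)"
  shows "\<forall>j<n. \<forall>a\<le>d. (layer ^^ l) Z0 j a =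
           (if a < d then x j a
            else y j - (\<Sum>k<d. gd_w d n \<eta> x y l k * x j k))"
proof (induction l)
  case 0
  then show ?case
    by (simp add: Z0_def)
next
  case (Suc l)
  show ?case
  proof (intro allI impI)
    fix j a
    assume "j < n" and "a \<le> d"
    then show "(layer ^^ Suc l) Z0 j a
        = (if a < d then x j a else y j - (\<Sum>k<d. gd_w d n \<eta> x y (Suc l) k * x j k))"
      unfolding funpow.simps o_apply gd_w_Suc_residual layer_def using Suc
      by (intro lsa_layer_residual_update) (simp_all add: layer_def)
  qed
qed

end
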